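(* Let $X,Y$ be real Banach spaces, $C\subseteq X$ a nonempty closed set, $f:X\to\mathbb{R}\cup\{+\infty\}$ and $g:X\to Y$. Let $x_0$ be a local solution of the problem $\min\{f(x)\,;\ g(x)=0,\ x\in C\}$. Assume: (H_f) $f$ is Gâteaux differentiable at $x_0$ and there exist $r>0$ and $K_f>0$ such that $f(x)-f(x')\le K_f\|x-x'\|_X$ for all $x,x'\in B_X(x_0,r)$; (H_g) $g$ is Gâteaux differentiable at $x_0$; and that the system "$x\in C$, $g(x)=0$" is calm at $x_0$, i.e. there exist $a>0$ and $s>0$ such that $d_{g^{-1}(0)\cap C}(x)\le a\|g(x)\|_Y$ for all $x\in B_X(x_0,s)\cap C$. Then: (i) if $x_0\in\operatorname{int}(C)$, there exists $y^*\in Y^*$ with $\|y^*\|_{Y^*}\le K_f a$ such that $Df(x_0)+D^*g(x_0)y^*=0$; (ii) if $g$ is locally Lipschitz around $x_0$ with constant $K_g>0$, then $$Df(x_0)h+K_fa\|Dg(x_0)h\|_Y+K_f(1+K_ga)\,d^-_C(x_0;h)\ge 0\quad\forall h\in X;$$ in particular there exists $y^*\in Y^*$ with $\|y^*\|_{Y^*}\le K_fa$ such that $0\in Df(x_0)+D^*g(x_0)y^*+N_C(x_0)$. If in addition $K(C,x_0)$ is convex, then there exists $y^*\in Y^*$ with $\|y^*\|_{Y^*}\le K_fa$ such that $0\in Df(x_0)+D^*g(x_0)y^*+(K(C,x_0))^0$.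
   Context: A local solution $x_0$ is a feasible point ($x_0\in C$, $g(x_0)=0$) such that $f(x_0)\le f(x)$ for all feasible $x$ in some neighbourhood of $x_0$. $B_X(x,r)$ is the closed ball. A map $\varphi$ is Gâteaux differentiable at $x_0$ if there is a bounded linear operator $D\varphi(x_0)$ with $\lim_{\tau\to0^+}(\varphi(x_0+\tau h)-\varphi(x_0))/\tau=D\varphi(x_0)h$ for all $h$; $D^*g(x_0):Y^*\to X^*$ is the adjoint of $Dg(x_0)$. For a nonempty $A\subseteq X$, $d_A(x)=\inf_{a\in A}\|x-a\|_X$. For $x\in A$: the lower Dini derivative is $d^-_A(x;h)=\liminf_{\tau\to0^+}d_A(x+\tau h)/\tau$; the contingent cone is $K(A,x)=\{h\in X: d^-_A(x;h)=0\}$; the Clarke tangent cone is $T_A(x)=\{h\in X:\lim_{y\to x,\,y\in A,\,\tau\to0^+}d_A(y+\tau h)/\tau=0\}$; the Clarke normal cone is $N_A(x)=T_A(x)^0$, where for a cone $\mathcal K$, $\mathcal K^0=\{x^*\in X^*:\langle x^*,h\rangle\le0\ \forall h\in\mathcal K\}$. *)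

theory Defs
  imports "HOL-Analysis.Analysis"
begin

definition gateaux_at :: "('a::real_normed_vector \<Rightarrow> 'b::real_normed_vector) \<Rightarrow> 'a \<Rightarrow> ('a \<Rightarrow>\<^sub>L 'b) \<Rightarrow> bool" where
  "gateaux_at g x D \<longleftrightarrow>
     (\<forall>h. ((\<lambda>\<tau>. (g (x + \<tau> *\<^sub>R h) - g x) /\<^sub>R \<tau>) \<longlongrightarrow> blinfun_apply D h) (at_right 0))"

definition gateaux_at_ereal :: "('a::real_normed_vector \<Rightarrow> ereal) \<Rightarrow> 'a \<Rightarrow> ('a \<Rightarrow>\<^sub>L real) \<Rightarrow> bool" where
  "gateaux_at_ereal f x D \<longleftrightarrow> \<bar>f x\<bar> \<noteq> \<infinity> \<and>
     (\<forall>h. ((\<lambda>\<tau>. (f (x + \<tau> *\<^sub>R h) - f x) / ereal \<tau>) \<longlongrightarrow> ereal (blinfun_apply D h)) (at_right 0))"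

definition lower_dini_dist :: "'a::real_normed_vector set \<Rightarrow> 'a \<Rightarrow> 'a \<Rightarrow> ereal" where
  "lower_dini_dist A x h = Liminf (at_right 0) (\<lambda>\<tau>. ereal (infdist (x + \<tau> *\<^sub>R h) A / \<tau>))"

definition contingent_cone :: "'a::real_normed_vector set \<Rightarrow> 'a \<Rightarrow> 'a set" where
  "contingent_cone A x = {h. lower_dini_dist A x h = 0}"

text \<open>Clarke tangent cone: limit as y \<rightarrow> x with y \<in> A (y = x allowed) and \<tau> \<rightarrow> 0+.\<close>
definition clarke_tangent_cone :: "'a::real_normed_vector set \<Rightarrow> 'a \<Rightarrow> 'a set" where
  "clarke_tangent_cone A x = {h.
     ((\<lambda>(y, \<tau>). infdist (y + \<tau> *\<^sub>R h) A / \<tau>) \<longlongrightarrow> 0)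
       ((inf (nhds x) (principal A)) \<times>\<^sub>F at_right 0)}"

definition polar_cone :: "'a::real_normed_vector set \<Rightarrow> ('a \<Rightarrow>\<^sub>L real) set" where
  "polar_cone K = {xs. \<forall>h\<in>K. blinfun_apply xs h \<le> 0}"

definition clarke_normal_cone :: "'a::real_normed_vector set \<Rightarrow> 'a \<Rightarrow> ('a \<Rightarrow>\<^sub>L real) set" where
  "clarke_normal_cone A x = polar_cone (clarke_tangent_cone A x)"

definition local_solution ::
  "('a::real_normed_vector \<Rightarrow> ereal) \<Rightarrow> ('a \<Rightarrow> 'b::real_normed_vector) \<Rightarrow> 'a set \<Rightarrow> 'a \<Rightarrow> bool" where
  "local_solution f g C x0 \<longleftrightarrow> x0 \<in> C \<and> g x0 = 0 \<and>
     (\<exists>\<epsilon>>0. \<forall>x\<in>C. g x = 0 \<and> x \<in> ball x0 \<epsilon> \<longrightarrow> f x0 \<le> f x)"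

end

theory Submission
  imports Defs
begin

text \<open>
  Near x0 the objective f is finite; call its real part F. It is Kf-Lipschitz, so Clarke's exact
  penalization (a Lipschitz function minimized on Z is minimized near the point, without constraint,
  once L d_Z is added) applied to Z = g^-1(0) \<inter> C, together with calmness, shows that x0 minimizes
  F + Kf a ||g|| on C near x0. If g is Kg-Lipschitz, this penalized function is Kf (1 + Kg a)-Lipschitz,
  and a second penalization trades the constraint x \<in> C for the term Kf (1 + Kg a) d_C. Dividing by
  tau along x0 + tau h and letting tau go to 0 gives the directional inequality of (ii); at an interior
  point no penalty for C is needed. Hence Df h + Kf a ||Dg h|| \<ge> 0 on the contingent cone, and so on the
  Clarke tangent cone. On a convex cone K such an inequality is dualized by Hahn-Banach: a linear
  minorant y* of the sublinear functional y \<mapsto> inf (h \<in> K) (Kf a ||y + Dg h|| + Df h) has norm at most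
  Kf a and makes Df + y* \<circ> Dg nonnegative on K. The Hahn-Banach step itself is derived from Zorn's lemma:
  a minimal sublinear functional is linear.
\<close>

section \<open>Sublinear functionals and linear minorants\<close>

definition sublinear :: "('a::real_vector \<Rightarrow> real) \<Rightarrow> bool" where
  "sublinear p \<longleftrightarrow> (\<forall>x y. p (x + y) \<le> p x + p y) \<and> (\<forall>t>0. \<forall>x. p (t *\<^sub>R x) = t * p x)"

lemma sublinear_add: "sublinear p \<Longrightarrow> p (x + y) \<le> p x + p y"
  unfolding sublinear_def by blast

lemma sublinear_zero:
  assumes "sublinear p"
  shows "p 0 = 0"
proof -
  have "p ((2::real) *\<^sub>R 0) = 2 * p 0"
    using assms unfolding sublinear_def by (metis zero_less_numeral)
  then show ?thesis by simp
qed

lemma sublinear_scaleR: "sublinear p \<Longrightarrow> 0 \<le> t \<Longrightarrow> p (t *\<^sub>R x) = t * p x"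
  using sublinear_zero[of p] unfolding sublinear_def by (cases "t = 0") auto

lemma sublinear_neg_le: "sublinear p \<Longrightarrow> - p (- x) \<le> p x"
  using sublinear_add[of p x "- x"] sublinear_zero[of p] by simp

lemma sublinearI:
  assumes "\<And>x y. p (x + y) \<le> p x + p y" and "\<And>t x. 0 < t \<Longrightarrow> p (t *\<^sub>R x) \<le> t * p x"
  shows "sublinear p"
proof -
  have "t * p x \<le> p (t *\<^sub>R x)" if "0 < t" for t x
    using assms(2)[of "1 / t" "t *\<^sub>R x"] that by (simp add: field_simps)
  then show ?thesis
    unfolding sublinear_def using assms by (meson order_antisym)
qed

lemma sublinear_INF:
  fixes \<psi> :: "'i \<Rightarrow> 'a::real_vector \<Rightarrow> real"
  assumes "I \<noteq> {}" and bdd: "\<And>x. bdd_below ((\<lambda>i. \<psi> i x) ` I)"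
    and add: "\<And>i j x y. i \<in> I \<Longrightarrow> j \<in> I \<Longrightarrow> \<exists>k\<in>I. \<psi> k (x + y) \<le> \<psi> i x + \<psi> j y"
    and scale: "\<And>t i x. 0 < t \<Longrightarrow> i \<in> I \<Longrightarrow> \<exists>j\<in>I. \<psi> j (t *\<^sub>R x) \<le> t * \<psi> i x"
  shows "sublinear (\<lambda>x. INF i\<in>I. \<psi> i x)"
proof (rule sublinearI)
  let ?p = "\<lambda>x. INF i\<in>I. \<psi> i x"
  have lower: "?p x \<le> \<psi> i x" if "i \<in> I" for i x
    using cINF_lower[OF bdd that] .
  fix x y
  have "?p (x + y) - \<psi> j y \<le> \<psi> i x" if ij: "i \<in> I" "j \<in> I" for i j
  proof -
    obtain k where "k \<in> I" "\<psi> k (x + y) \<le> \<psi> i x + \<psi> j y"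
      using add[OF ij] by blast
    with lower[of k "x + y"] show ?thesis by linarith
  qed
  then have "?p (x + y) - \<psi> j y \<le> ?p x" if "j \<in> I" for j
    using that \<open>I \<noteq> {}\<close> by (intro cINF_greatest) auto
  then have "?p (x + y) - ?p x \<le> ?p y"
    using \<open>I \<noteq> {}\<close> by (intro cINF_greatest) (auto simp: algebra_simps)
  then show "?p (x + y) \<le> ?p x + ?p y" by simp
next
  let ?p = "\<lambda>x. INF i\<in>I. \<psi> i x"
  fix t :: real and x assume "0 < t"
  have "?p (t *\<^sub>R x) / t \<le> \<psi> i x" if i: "i \<in> I" for i
  proof -
    obtain j where "j \<in> I" "\<psi> j (t *\<^sub>R x) \<le> t * \<psi> i x"
      using scale[OF \<open>0 < t\<close> i] by blast
    then have "?p (t *\<^sub>R x) \<le> t * \<psi> i x"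
      using cINF_lower[OF bdd] order_trans by blast
    then show ?thesis using \<open>0 < t\<close> by (simp add: field_simps)
  qed
  then have "?p (t *\<^sub>R x) / t \<le> ?p x"
    using \<open>I \<noteq> {}\<close> by (intro cINF_greatest) auto
  then show "?p (t *\<^sub>R x) \<le> t * ?p x"
    using \<open>0 < t\<close> by (simp add: field_simps)
qed

lemma linear_if_minimal_sublinear:
  fixes m :: "'a::real_vector \<Rightarrow> real"
  assumes m: "sublinear m" and minimal: "\<And>q. sublinear q \<Longrightarrow> q \<le> m \<Longrightarrow> q = m"
  shows "linear m"
proof -
  have additive: "m (x + y) = m x + m y" for x y
  proof -
    \<comment> \<open>The infimum over t \<ge> 0 is a sublinear minorant of m, hence equal to m; t = 1 gives superadditivity.\<close>
    define \<psi> where "\<psi> t x = m (x + t *\<^sub>R y) - t * m y" for t :: real and x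
    have bdd: "bdd_below ((\<lambda>t. \<psi> t x) ` {0..})" for x
    proof (rule bdd_belowI2)
      fix t :: real assume "t \<in> {0..}"
      then have "m (t *\<^sub>R y) = t * m y" using sublinear_scaleR[OF m] by simp
      moreover have "m (t *\<^sub>R y) \<le> m (x + t *\<^sub>R y) + m (- x)"
        using sublinear_add[OF m, of "x + t *\<^sub>R y" "- x"] by simp
      ultimately show "- m (- x) \<le> \<psi> t x" unfolding \<psi>_def by linarith
    qed
    have "sublinear (\<lambda>x. INF t\<in>{0..}. \<psi> t x)"
    proof (rule sublinear_INF[OF _ bdd])
      show "\<exists>k\<in>{0..}. \<psi> k (x1 + x2) \<le> \<psi> t1 x1 + \<psi> t2 x2"
        if "t1 \<in> {0..}" "t2 \<in> {0..}" for t1 t2 x1 x2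
        using that sublinear_add[OF m, of "x1 + t1 *\<^sub>R y" "x2 + t2 *\<^sub>R y"]
        by (intro bexI[of _ "t1 + t2"]) (auto simp: \<psi>_def algebra_simps)
      show "\<exists>j\<in>{0..}. \<psi> j (s *\<^sub>R x) \<le> s * \<psi> t x" if "0 < s" "t \<in> {0..}" for s t x
        using that sublinear_scaleR[OF m, of s "x + t *\<^sub>R y"]
        by (intro bexI[of _ "s * t"]) (auto simp: \<psi>_def algebra_simps)
    qed simp
    moreover have "(INF t\<in>{0..}. \<psi> t x) \<le> \<psi> t x" if "0 \<le> t" for t x
      using cINF_lower[OF bdd] that by simp
    ultimately have "(\<lambda>x. INF t\<in>{0..}. \<psi> t x) = m"
      using minimal[of "\<lambda>x. INF t\<in>{0..}. \<psi> t x"] by (force simp: le_fun_def \<psi>_def)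
    then have "m x \<le> m (x + y) - m y"
      using cINF_lower[OF bdd, of 1 x] by (simp add: \<psi>_def fun_eq_iff)
    with sublinear_add[OF m, of x y] show ?thesis by linarith
  qed
  have neg: "m (- x) = - m x" for x
    using additive[of x "- x"] sublinear_zero[OF m] by simp
  have "m (t *\<^sub>R x) = t * m x" for t x
  proof (cases "0 \<le> t")
    case False
    then have "m (t *\<^sub>R x) = - m ((- t) *\<^sub>R x)" using neg[of "(- t) *\<^sub>R x"] by simp
    then show ?thesis using sublinear_scaleR[OF m, of "- t" x] False by simp
  qed (rule sublinear_scaleR[OF m])
  with additive show ?thesis by (intro linearI) auto
qed

lemma sublinear_INF_chain:
  fixes Q :: "('a::real_vector \<Rightarrow> real) set"
  assumes "Q \<noteq> {}" and sub: "\<And>q. q \<in> Q \<Longrightarrow> sublinear q \<and> q \<le> p"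
    and comparable: "\<And>q1 q2. q1 \<in> Q \<Longrightarrow> q2 \<in> Q \<Longrightarrow> q1 \<le> q2 \<or> q2 \<le> q1"
  shows "sublinear (\<lambda>x. INF q\<in>Q. q x)" and "\<And>q. q \<in> Q \<Longrightarrow> (\<lambda>x. INF q\<in>Q. q x) \<le> q"
proof -
  have bdd: "bdd_below ((\<lambda>q. q x) ` Q)" for x
  proof (rule bdd_belowI2)
    fix q assume "q \<in> Q"
    then have "sublinear q" "q (- x) \<le> p (- x)" using sub by (auto simp: le_fun_def)
    then show "- p (- x) \<le> q x" using sublinear_neg_le[of q x] by linarith
  qed
  show "sublinear (\<lambda>x. INF q\<in>Q. q x)"
  proof (rule sublinear_INF[OF \<open>Q \<noteq> {}\<close> bdd])
    show "\<exists>k\<in>Q. k (x + y) \<le> q1 x + q2 y" if q12: "q1 \<in> Q" "q2 \<in> Q" for q1 q2 x y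
    proof -
      obtain k where "k \<in> Q" "k \<le> q1" "k \<le> q2" using comparable[OF q12] q12 by blast
      moreover have "k (x + y) \<le> k x + k y" using \<open>k \<in> Q\<close> sub sublinear_add by blast
      ultimately show ?thesis by (metis add_mono le_fun_def order_trans)
    qed
    show "\<exists>j\<in>Q. j (t *\<^sub>R x) \<le> t * q x" if "0 < t" "q \<in> Q" for t q x
      using that sub sublinear_scaleR[of q t x] by (intro bexI[of _ q]) auto
  qed
  show "(\<lambda>x. INF q\<in>Q. q x) \<le> q" if "q \<in> Q" for q
    using cINF_lower[OF bdd that] by (simp add: le_fun_def)
qed

lemma sublinear_dominates_linear:
  fixes p :: "'a::real_vector \<Rightarrow> real"
  assumes p: "sublinear p"
  shows "\<exists>l. linear l \<and> l \<le> p"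
proof -
  define A where "A = {q. sublinear q \<and> q \<le> p}"
  have "\<exists>m\<in>A. \<forall>q\<in>A. q \<le> m \<longrightarrow> q = m"
  proof (rule predicate_Zorn)
    show "partial_order_on A (relation_of (\<lambda>q1 q2. q2 \<le> q1) A)"
      by (rule partial_order_on_relation_ofI) auto
    show "\<exists>u\<in>A. \<forall>q\<in>Q. u \<le> q" if Q: "Q \<in> Chains (relation_of (\<lambda>q1 q2. q2 \<le> q1) A)" for Q
    proof (cases "Q = {}")
      case True
      then show ?thesis using p by (auto simp: A_def)
    next
      case False
      have QA: "Q \<subseteq> A" using Chains_relation_of[OF Q] .
      have "q1 \<le> q2 \<or> q2 \<le> q1" if "q1 \<in> Q" "q2 \<in> Q" for q1 q2
        using Q that unfolding Chains_def relation_of_def by auto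
      then have "sublinear (\<lambda>x. INF q\<in>Q. q x)" "\<And>q. q \<in> Q \<Longrightarrow> (\<lambda>x. INF q\<in>Q. q x) \<le> q"
        using sublinear_INF_chain[OF False, of p] QA by (auto simp: A_def)
      moreover obtain q where "q \<in> Q" using False by blast
      ultimately show ?thesis using QA by (auto simp: A_def intro: order_trans)
    qed
  qed
  then obtain m where "m \<in> A" and minimal: "\<And>q. q \<in> A \<Longrightarrow> q \<le> m \<Longrightarrow> q = m" by blast
  then have "linear m"
    by (intro linear_if_minimal_sublinear) (auto simp: A_def intro: order_trans)
  with \<open>m \<in> A\<close> show ?thesis by (auto simp: A_def)
qed

section \<open>Bounded multipliers on convex sets\<close>

lemma linear_le_norm_imp_blinfun:
  fixes l :: "'a::real_normed_vector \<Rightarrow> real"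
  assumes l: "linear l" and "0 \<le> c" and le: "\<And>y. l y \<le> c * norm y"
  shows "\<exists>ys::'a \<Rightarrow>\<^sub>L real. norm ys \<le> c \<and> blinfun_apply ys = l"
proof -
  have bound: "norm (l y) \<le> c * norm y" for y
    using le[of y] le[of "- y"] linear_neg[OF l, of y] by (simp add: abs_le_iff)
  then have "bounded_linear l"
    using l by (intro bounded_linear_intro[where K = c]) (auto simp: linear_add linear_scale mult.commute)
  then have "blinfun_apply (Blinfun l) = l" by (rule bounded_linear_Blinfun_apply)
  moreover have "norm (Blinfun l) \<le> c"
    using \<open>0 \<le> c\<close> bound by (intro norm_blinfun_bound) (auto simp: calculation)
  ultimately show ?thesis by blast
qed

lemma bounded_multiplier_on_convex_cone:
  fixes A :: "'a::real_normed_vector \<Rightarrow>\<^sub>L 'b::real_normed_vector" and \<phi> :: "'a \<Rightarrow>\<^sub>L real"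
  assumes K: "convex_cone K" and c: "0 \<le> c"
    and nonneg: "\<And>h. h \<in> K \<Longrightarrow> 0 \<le> \<phi> h + c * norm (A h)"
  shows "\<exists>ys::'b \<Rightarrow>\<^sub>L real. norm ys \<le> c \<and> (\<forall>h\<in>K. 0 \<le> \<phi> h + blinfun_apply ys (A h))"
proof -
  \<comment> \<open>A linear minorant of p is the multiplier: p \<le> c ||\<cdot>|| bounds it, and p (- A h) \<le> \<phi> h gives the sign.\<close>
  define \<psi> where "\<psi> h y = c * norm (y + A h) + \<phi> h" for h y
  define p where "p y = (INF h\<in>K. \<psi> h y)" for y
  have bdd: "bdd_below ((\<lambda>h. \<psi> h y) ` K)" for y
  proof (rule bdd_belowI2)
    fix h assume "h \<in> K"
    have "c * (norm (A h) - norm y) \<le> c * norm (y + A h)"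
      using c norm_diff_ineq[of "A h" y] by (intro mult_left_mono) (auto simp: add.commute)
    with nonneg[OF \<open>h \<in> K\<close>] show "- c * norm y \<le> \<psi> h y"
      by (simp add: \<psi>_def algebra_simps)
  qed
  have "sublinear p"
    unfolding p_def
  proof (rule sublinear_INF[OF convex_cone_nonempty[OF K] bdd])
    show "\<exists>k\<in>K. \<psi> k (y1 + y2) \<le> \<psi> h1 y1 + \<psi> h2 y2" if "h1 \<in> K" "h2 \<in> K" for h1 h2 y1 y2
    proof (intro bexI)
      have "norm (y1 + y2 + A (h1 + h2)) \<le> norm (y1 + A h1) + norm (y2 + A h2)"
        using norm_triangle_ineq[of "y1 + A h1" "y2 + A h2"] by (simp add: blinfun.add_right algebra_simps)
      then show "\<psi> (h1 + h2) (y1 + y2) \<le> \<psi> h1 y1 + \<psi> h2 y2"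
        using mult_left_mono[OF _ c] by (fastforce simp: \<psi>_def blinfun.add_right algebra_simps)
    qed (rule convex_cone_add[OF K that])
    show "\<exists>j\<in>K. \<psi> j (t *\<^sub>R y) \<le> t * \<psi> h y" if "0 < t" "h \<in> K" for t h y
    proof (intro bexI)
      have "norm (t *\<^sub>R y + A (t *\<^sub>R h)) = t * norm (y + A h)"
        using \<open>0 < t\<close> by (simp add: blinfun.scaleR_right flip: scaleR_add_right)
      then show "\<psi> (t *\<^sub>R h) (t *\<^sub>R y) \<le> t * \<psi> h y"
        by (simp add: \<psi>_def blinfun.scaleR_right algebra_simps)
    qed (use convex_cone_scaleR[OF K] that in auto)
  qed
  then obtain l where l: "linear l" "l \<le> p" using sublinear_dominates_linear by blast
  have p_le: "p y \<le> c * norm y" for y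
    using cINF_lower[OF bdd convex_cone_contains_0[OF K], of y] by (simp add: p_def \<psi>_def)
  have "l y \<le> c * norm y" for y
    using l(2) p_le[of y] by (auto simp: le_fun_def intro: order_trans)
  then obtain ys :: "'b \<Rightarrow>\<^sub>L real" where "norm ys \<le> c" and ys: "blinfun_apply ys = l"
    using linear_le_norm_imp_blinfun[OF l(1) c] by blast
  moreover have "0 \<le> \<phi> h + l (A h)" if "h \<in> K" for h
  proof -
    have "l (- A h) \<le> p (- A h)" using l(2) by (simp add: le_fun_def)
    also have "\<dots> \<le> \<psi> h (- A h)" unfolding p_def using cINF_lower[OF bdd that] .
    finally show ?thesis using linear_neg[OF l(1)] by (simp add: \<psi>_def)
  qed
  ultimately show ?thesis using ys by auto
qed

lemma polar_multiplier_exists: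
  fixes A :: "'a::real_normed_vector \<Rightarrow>\<^sub>L 'b::real_normed_vector" and \<phi> :: "'a \<Rightarrow>\<^sub>L real"
  assumes "convex K" "K \<noteq> {}" "0 \<le> c"
    and nonneg: "\<And>h. h \<in> K \<Longrightarrow> 0 \<le> \<phi> h + c * norm (A h)"
  shows "\<exists>ys::'b \<Rightarrow>\<^sub>L real. norm ys \<le> c \<and> (\<exists>n\<in>polar_cone K. \<phi> + (ys o\<^sub>L A) + n = 0)"
proof -
  have "convex_cone (conic hull K)"
    using assms by (simp add: convex_cone_def convex_conic_hull conic_conic_hull conic_hull_eq_empty)
  moreover have "0 \<le> \<phi> h + c * norm (A h)" if h: "h \<in> conic hull K" for h
  proof -
    obtain t k where "h = t *\<^sub>R k" "0 \<le> t" "k \<in> K"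
      using h by (auto simp: conic_hull_explicit)
    then show ?thesis
      using mult_nonneg_nonneg[OF \<open>0 \<le> t\<close> nonneg[OF \<open>k \<in> K\<close>]]
      by (simp add: blinfun.scaleR_right algebra_simps)
  qed
  ultimately obtain ys :: "'b \<Rightarrow>\<^sub>L real"
    where "norm ys \<le> c" and ys: "\<And>h. h \<in> conic hull K \<Longrightarrow> 0 \<le> \<phi> h + ys (A h)"
    using bounded_multiplier_on_convex_cone \<open>0 \<le> c\<close> by blast
  moreover have "- (\<phi> + (ys o\<^sub>L A)) \<in> polar_cone K"
    using ys hull_subset[of K conic]
    by (fastforce simp: polar_cone_def minus_blinfun.rep_eq plus_blinfun.rep_eq uminus_blinfun.rep_eq)
  ultimately show ?thesis by (intro exI[of _ ys]) (auto intro!: bexI[of _ "- (\<phi> + (ys o\<^sub>L A))"])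
qed

lemma polar_cone_UNIV: "polar_cone UNIV = {0}"
proof -
  have "n = 0" if "n \<in> polar_cone UNIV" for n :: "'a \<Rightarrow>\<^sub>L real"
  proof (rule blinfun_eqI)
    fix h
    have "n h \<le> 0" "n (- h) \<le> 0" using that by (auto simp: polar_cone_def)
    then show "blinfun_apply n h = blinfun_apply 0 h" by (simp add: blinfun.minus_right)
  qed
  then show ?thesis by (auto simp: polar_cone_def)
qed

section \<open>Tangent cones\<close>

lemma exists_dist_less_infdist:
  assumes "A \<noteq> {}" "0 < e"
  shows "\<exists>a\<in>A. dist x a < infdist x A + e"
proof -
  have "(INF a\<in>A. dist x a) < infdist x A + e"
    using assms by (simp add: infdist_notempty)
  then show ?thesis
    by (simp add: cINF_less_iff[OF assms(1)])
qed

lemma eventually_clarke_filter: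
  "eventually P (inf (nhds x) (principal A) \<times>\<^sub>F at_right 0) \<longleftrightarrow>
     (\<exists>d>0. \<forall>y\<in>A. \<forall>\<tau>. dist y x < d \<longrightarrow> 0 < \<tau> \<longrightarrow> \<tau> < d \<longrightarrow> P (y, \<tau>))"
proof
  assume "eventually P (inf (nhds x) (principal A) \<times>\<^sub>F at_right 0)"
  then obtain Py P\<tau> where "eventually Py (inf (nhds x) (principal A))" "eventually P\<tau> (at_right 0)"
    and P: "\<And>y \<tau>. Py y \<Longrightarrow> P\<tau> \<tau> \<Longrightarrow> P (y, \<tau>)"
    unfolding eventually_prod_filter by blast
  then obtain d1 d2 where "0 < d1" "\<And>y. dist y x < d1 \<Longrightarrow> y \<in> A \<Longrightarrow> Py y"
    and "0 < d2" "\<And>\<tau>. 0 < \<tau> \<Longrightarrow> \<tau> < d2 \<Longrightarrow> P\<tau> \<tau>"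
    unfolding eventually_inf_principal eventually_nhds_metric eventually_at_right_field by auto
  then show "\<exists>d>0. \<forall>y\<in>A. \<forall>\<tau>. dist y x < d \<longrightarrow> 0 < \<tau> \<longrightarrow> \<tau> < d \<longrightarrow> P (y, \<tau>)"
    using P by (intro exI[of _ "min d1 d2"]) auto
next
  assume "\<exists>d>0. \<forall>y\<in>A. \<forall>\<tau>. dist y x < d \<longrightarrow> 0 < \<tau> \<longrightarrow> \<tau> < d \<longrightarrow> P (y, \<tau>)"
  then obtain d where "0 < d" and P: "\<forall>y\<in>A. \<forall>\<tau>. dist y x < d \<longrightarrow> 0 < \<tau> \<longrightarrow> \<tau> < d \<longrightarrow> P (y, \<tau>)"
    by blast
  have "eventually (\<lambda>y. y \<in> A \<and> dist y x < d) (inf (nhds x) (principal A))"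
    unfolding eventually_inf_principal eventually_nhds_metric using \<open>0 < d\<close> by blast
  moreover have "eventually (\<lambda>\<tau>. 0 < \<tau> \<and> \<tau> < d) (at_right (0::real))"
    unfolding eventually_at_right_field using \<open>0 < d\<close> by blast
  ultimately show "eventually P (inf (nhds x) (principal A) \<times>\<^sub>F at_right 0)"
    unfolding eventually_prod_filter using P by blast
qed

lemma clarke_tangent_cone_iff:
  "h \<in> clarke_tangent_cone A x \<longleftrightarrow>
     (\<forall>e>0. \<exists>d>0. \<forall>y\<in>A. \<forall>\<tau>. dist y x < d \<longrightarrow> 0 < \<tau> \<longrightarrow> \<tau> < d \<longrightarrow> infdist (y + \<tau> *\<^sub>R h) A < e * \<tau>)"
proof -
  have *: "(dist y x < d \<longrightarrow> 0 < \<tau> \<longrightarrow> \<tau> < d \<longrightarrow> dist (infdist (y + \<tau> *\<^sub>R h) A / \<tau>) 0 < e) \<longleftrightarrow>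
      (dist y x < d \<longrightarrow> 0 < \<tau> \<longrightarrow> \<tau> < d \<longrightarrow> infdist (y + \<tau> *\<^sub>R h) A < e * \<tau>)" for y \<tau> d e
    using infdist_nonneg[of "y + \<tau> *\<^sub>R h" A] by (auto simp: pos_divide_less_eq)
  show ?thesis
    unfolding clarke_tangent_cone_def mem_Collect_eq tendsto_iff eventually_clarke_filter prod.case * ..
qed

lemma zero_in_clarke_tangent_cone: "0 \<in> clarke_tangent_cone A x"
  unfolding clarke_tangent_cone_iff by (auto intro!: exI[of _ 1])

lemma clarke_tangent_cone_scaleR:
  assumes h: "h \<in> clarke_tangent_cone A x" and "0 \<le> t"
  shows "t *\<^sub>R h \<in> clarke_tangent_cone A x"
proof (cases "t = 0")
  case True
  then show ?thesis by (simp add: zero_in_clarke_tangent_cone)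
next
  case False
  with \<open>0 \<le> t\<close> have "0 < t" by simp
  show ?thesis
    unfolding clarke_tangent_cone_iff
  proof (intro allI impI)
    fix e :: real assume "0 < e"
    then obtain d where "0 < d"
      and d: "\<And>y \<tau>. y \<in> A \<Longrightarrow> dist y x < d \<Longrightarrow> 0 < \<tau> \<Longrightarrow> \<tau> < d \<Longrightarrow> infdist (y + \<tau> *\<^sub>R h) A < e / t * \<tau>"
      using h \<open>0 < t\<close> unfolding clarke_tangent_cone_iff by (metis divide_pos_pos)
    have "infdist (y + \<tau> *\<^sub>R t *\<^sub>R h) A < e * \<tau>"
      if "y \<in> A" "dist y x < min d (d / t)" "0 < \<tau>" "\<tau> < min d (d / t)" for y \<tau>
      using d[of y "t * \<tau>"] that \<open>0 < t\<close> by (simp add: field_simps)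
    with \<open>0 < d\<close> \<open>0 < t\<close> show "\<exists>d>0. \<forall>y\<in>A. \<forall>\<tau>. dist y x < d \<longrightarrow> 0 < \<tau> \<longrightarrow> \<tau> < d \<longrightarrow>
        infdist (y + \<tau> *\<^sub>R t *\<^sub>R h) A < e * \<tau>"
      by (intro exI[of _ "min d (d / t)"]) auto
  qed
qed

lemma clarke_tangent_cone_add:
  assumes h1: "h1 \<in> clarke_tangent_cone A x" and h2: "h2 \<in> clarke_tangent_cone A x"
    and "A \<noteq> {}"
  shows "h1 + h2 \<in> clarke_tangent_cone A x"
  unfolding clarke_tangent_cone_iff
proof (intro allI impI)
  fix e :: real assume "0 < e"
  obtain d1 where "0 < d1" and d1: "\<And>y \<tau>. y \<in> A \<Longrightarrow> dist y x < d1 \<Longrightarrow> 0 < \<tau> \<Longrightarrow> \<tau> < d1 \<Longrightarrow>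
      infdist (y + \<tau> *\<^sub>R h1) A < e / 4 * \<tau>"
    using h1 \<open>0 < e\<close> unfolding clarke_tangent_cone_iff by (metis zero_less_divide_iff zero_less_numeral)
  obtain d2 where "0 < d2" and d2: "\<And>y \<tau>. y \<in> A \<Longrightarrow> dist y x < d2 \<Longrightarrow> 0 < \<tau> \<Longrightarrow> \<tau> < d2 \<Longrightarrow>
      infdist (y + \<tau> *\<^sub>R h2) A < e / 2 * \<tau>"
    using h2 \<open>0 < e\<close> unfolding clarke_tangent_cone_iff by (metis zero_less_divide_iff zero_less_numeral)
  define d where "d = min d1 (min (d2 / 2) (d2 / (2 * (norm h1 + e + 1))))"
  have "0 < norm h1 + e + 1" using \<open>0 < e\<close> norm_ge_zero[of h1] by linarith
  then have "0 < d" using \<open>0 < d1\<close> \<open>0 < d2\<close> by (simp add: d_def)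
  have "infdist (y + \<tau> *\<^sub>R (h1 + h2)) A < e * \<tau>"
    if y: "y \<in> A" "dist y x < d" and \<tau>: "0 < \<tau>" "\<tau> < d" for y \<tau>
  proof -
    \<comment> \<open>\<open>y + \<tau> h1\<close> lies within \<open>o(\<tau>)\<close> of a point \<open>z\<close> of \<open>A\<close> near \<open>x\<close>, and \<open>h2\<close> is tangent at \<open>z\<close>.\<close>
    define w where "w = y + \<tau> *\<^sub>R h1"
    have "infdist w A < e / 4 * \<tau>"
      using d1[OF y(1)] y(2) \<tau> by (simp add: w_def d_def)
    moreover obtain z where "z \<in> A" "dist w z < infdist w A + e / 4 * \<tau>"
      using exists_dist_less_infdist[OF \<open>A \<noteq> {}\<close>, of "e / 4 * \<tau>" w] \<tau>(1) \<open>0 < e\<close> by auto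
    ultimately have wz: "dist w z < e / 2 * \<tau>" by simp
    have "dist y x < d2 / 2" "\<tau> < d2"
      using y(2) \<tau> \<open>0 < d2\<close> by (simp_all add: d_def)
    have "\<tau> * (norm h1 + e + 1) < d2 / 2"
      using \<tau>(2) \<open>0 < norm h1 + e + 1\<close> by (simp add: d_def field_simps)
    then have "\<tau> * norm h1 + e * \<tau> < d2 / 2"
      using \<tau>(1) by (simp add: algebra_simps)
    moreover have "dist z x \<le> dist w z + \<tau> * norm h1 + dist y x"
      using dist_triangle[of z x w] dist_triangle[of w x y] \<tau>(1)
      by (simp add: w_def dist_commute dist_norm)
    moreover have "e / 2 * \<tau> \<le> e * \<tau>"
      using \<tau>(1) \<open>0 < e\<close> by simp
    ultimately have "dist z x < d2"
      using wz \<open>dist y x < d2 / 2\<close> by linarith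
    then have "infdist (z + \<tau> *\<^sub>R h2) A < e / 2 * \<tau>"
      using \<open>\<tau> < d2\<close> d2 \<open>z \<in> A\<close> \<tau>(1) by blast
    moreover have "infdist (y + \<tau> *\<^sub>R (h1 + h2)) A \<le> infdist (z + \<tau> *\<^sub>R h2) A + dist w z"
      using infdist_triangle[of "y + \<tau> *\<^sub>R (h1 + h2)" A "z + \<tau> *\<^sub>R h2"]
      by (simp add: w_def dist_norm scaleR_add_right algebra_simps)
    ultimately show ?thesis using wz by simp
  qed
  with \<open>0 < d\<close> show "\<exists>d>0. \<forall>y\<in>A. \<forall>\<tau>. dist y x < d \<longrightarrow> 0 < \<tau> \<longrightarrow> \<tau> < d \<longrightarrow>
      infdist (y + \<tau> *\<^sub>R (h1 + h2)) A < e * \<tau>"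
    by blast
qed

lemma convex_cone_clarke_tangent_cone:
  "A \<noteq> {} \<Longrightarrow> convex_cone (clarke_tangent_cone A x)"
  using zero_in_clarke_tangent_cone clarke_tangent_cone_scaleR clarke_tangent_cone_add
  unfolding convex_cone_iff by blast

lemma clarke_tangent_cone_subset_contingent_cone:
  assumes "x \<in> A"
  shows "clarke_tangent_cone A x \<subseteq> contingent_cone A x"
proof
  fix h assume "h \<in> clarke_tangent_cone A x"
  have "((\<lambda>\<tau>. infdist (x + \<tau> *\<^sub>R h) A / \<tau>) \<longlongrightarrow> 0) (at_right 0)"
  proof (rule tendstoI)
    fix e :: real assume "0 < e"
    then obtain d where "0 < d" and d: "\<And>\<tau>. 0 < \<tau> \<Longrightarrow> \<tau> < d \<Longrightarrow> infdist (x + \<tau> *\<^sub>R h) A < e * \<tau>"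
      using \<open>h \<in> clarke_tangent_cone A x\<close> \<open>x \<in> A\<close> unfolding clarke_tangent_cone_iff by force
    show "eventually (\<lambda>\<tau>. dist (infdist (x + \<tau> *\<^sub>R h) A / \<tau>) 0 < e) (at_right 0)"
      unfolding eventually_at_right_field
      using \<open>0 < d\<close> d by (auto simp: pos_divide_less_eq infdist_nonneg intro!: exI[of _ d])
  qed
  then have "Liminf (at_right 0) (\<lambda>\<tau>. ereal (infdist (x + \<tau> *\<^sub>R h) A / \<tau>)) = ereal 0"
    by (intro lim_imp_Liminf tendsto_ereal) simp_all
  then show "h \<in> contingent_cone A x"
    by (simp add: contingent_cone_def lower_dini_dist_def)
qed

lemma nonneg_on_contingent_cone:
  assumes dini: "\<And>h. 0 \<le> ereal (\<phi> h) + ereal M * lower_dini_dist C x0 h"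
    and "h \<in> contingent_cone C x0"
  shows "0 \<le> \<phi> h"
  using dini[of h] assms(2) by (simp add: contingent_cone_def)

section \<open>Exact penalization and the directional inequality\<close>

lemma exact_penalization:
  fixes F :: "'a::metric_space \<Rightarrow> real"
  assumes lip: "L-lipschitz_on (ball x0 r) F" and "x0 \<in> Z"
    and min: "\<And>z. z \<in> Z \<Longrightarrow> z \<in> ball x0 r \<Longrightarrow> F x0 \<le> F z"
    and x: "x \<in> ball x0 (r / 3)"
  shows "F x0 \<le> F x + L * infdist x Z"
proof (rule field_le_epsilon)
  fix e :: real assume "0 < e"
  have "0 \<le> L" using lipschitz_on_nonneg[OF lip] .
  have "dist x0 x < r / 3" using x by simp
  then have "0 < r" using zero_le_dist[of x0 x] by linarith
  define \<eta> where "\<eta> = min (r / 3) (e / (L + 1))"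
  have "0 < \<eta>" using \<open>0 < r\<close> \<open>0 < e\<close> \<open>0 \<le> L\<close> by (simp add: \<eta>_def)
  have "L * \<eta> \<le> e"
  proof -
    have "L * \<eta> \<le> (L + 1) * (e / (L + 1))"
      using \<open>0 \<le> L\<close> \<open>0 < \<eta>\<close> \<open>0 < e\<close> by (intro mult_mono) (auto simp: \<eta>_def)
    then show ?thesis using \<open>0 \<le> L\<close> by simp
  qed
  obtain z where "z \<in> Z" and z: "dist x z < infdist x Z + \<eta>"
    using exists_dist_less_infdist[of Z \<eta> x] \<open>x0 \<in> Z\<close> \<open>0 < \<eta>\<close> by blast
  have "infdist x Z \<le> dist x x0" using infdist_le[OF \<open>x0 \<in> Z\<close>] .
  moreover have "\<eta> \<le> r / 3" unfolding \<eta>_def by (rule min.cobounded1)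
  ultimately have "dist x0 z < r"
    using \<open>dist x0 x < r / 3\<close> z dist_triangle[of x0 z x] dist_commute[of x x0] by linarith
  then have "z \<in> ball x0 r" "x \<in> ball x0 r"
    using \<open>dist x0 x < r / 3\<close> \<open>0 < r\<close> by auto
  have "F x0 \<le> F z" using min \<open>z \<in> Z\<close> \<open>z \<in> ball x0 r\<close> .
  also have "F z \<le> F x + L * dist z x"
    using lipschitz_onD[OF lip \<open>z \<in> ball x0 r\<close> \<open>x \<in> ball x0 r\<close>] by (simp add: dist_real_def)
  also have "L * dist z x \<le> L * (infdist x Z + \<eta>)"
    using z \<open>0 \<le> L\<close> by (intro mult_left_mono) (auto simp: dist_commute)
  finally show "F x0 \<le> F x + L * infdist x Z + e"
    using \<open>L * \<eta> \<le> e\<close> by (simp add: algebra_simps)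
qed

lemma calm_exact_penalization:
  fixes F :: "'a::metric_space \<Rightarrow> real" and g :: "'a \<Rightarrow> 'b::real_normed_vector"
  assumes lip: "L-lipschitz_on (ball x0 r) F" and "x0 \<in> C" "g x0 = 0"
    and min: "\<And>z. z \<in> C \<Longrightarrow> g z = 0 \<Longrightarrow> z \<in> ball x0 r \<Longrightarrow> F x0 \<le> F z"
    and calm: "\<And>x. x \<in> C \<Longrightarrow> x \<in> ball x0 r \<Longrightarrow> infdist x ({x. g x = 0} \<inter> C) \<le> a * norm (g x)"
    and x: "x \<in> C" "x \<in> ball x0 (r / 3)"
  shows "F x0 \<le> F x + L * a * norm (g x)"
proof -
  have "dist x0 x < r / 3" using x(2) by simp
  then have "dist x0 x < r" using zero_le_dist[of x0 x] by linarith
  then have "infdist x ({x. g x = 0} \<inter> C) \<le> a * norm (g x)"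
    using calm[OF x(1)] by simp
  have "F x0 \<le> F x + L * infdist x ({x. g x = 0} \<inter> C)"
  proof (rule exact_penalization[OF lip _ _ x(2)])
    show "x0 \<in> {x. g x = 0} \<inter> C" using \<open>x0 \<in> C\<close> \<open>g x0 = 0\<close> by simp
    show "F x0 \<le> F z" if "z \<in> {x. g x = 0} \<inter> C" "z \<in> ball x0 r" for z
      using min that by simp
  qed
  also have "\<dots> \<le> F x + L * (a * norm (g x))"
    using \<open>infdist x ({x. g x = 0} \<inter> C) \<le> a * norm (g x)\<close> lipschitz_on_nonneg[OF lip]
    by (intro add_left_mono mult_left_mono)
  finally show ?thesis by (simp add: mult.assoc)
qed

lemma eventually_in_ball_at_right:
  fixes x h :: "'a::real_normed_vector"
  assumes "0 < r"
  shows "eventually (\<lambda>\<tau>. x + \<tau> *\<^sub>R h \<in> ball x r) (at_right 0)"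
proof -
  have "((\<lambda>\<tau>. x + \<tau> *\<^sub>R h) \<longlongrightarrow> x + 0 *\<^sub>R h) (at_right 0)"
    by (intro tendsto_intros)
  then show ?thesis
    using assms by (intro topological_tendstoD) auto
qed

lemma local_min_dini_inequality:
  fixes \<Phi> :: "'a::real_normed_vector \<Rightarrow> real"
  assumes "0 < \<delta>" "0 \<le> M"
    and min: "\<And>x. x \<in> ball x0 \<delta> \<Longrightarrow> \<Phi> x0 \<le> \<Phi> x + M * infdist x C"
    and quotient: "((\<lambda>\<tau>. (\<Phi> (x0 + \<tau> *\<^sub>R h) - \<Phi> x0) / \<tau>) \<longlongrightarrow> D) (at_right 0)"
  shows "0 \<le> ereal D + ereal M * lower_dini_dist C x0 h"
proof -
  define d where "d \<tau> = infdist (x0 + \<tau> *\<^sub>R h) C / \<tau>" for \<tau>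
  have dini: "lower_dini_dist C x0 h = Liminf (at_right 0) (\<lambda>\<tau>. ereal (d \<tau>))"
    by (simp add: lower_dini_dist_def d_def)
  \<comment> \<open>Bounding the quotient by D + e leaves the Liminf of a constant plus a nonnegative multiple.\<close>
  have approx: "0 \<le> ereal (D + e) + ereal M * lower_dini_dist C x0 h" if "0 < e" for e
  proof -
    have "D < D + e" using \<open>0 < e\<close> by simp
    have "eventually (\<lambda>\<tau>. 0 \<le> ereal (D + e) + ereal M * ereal (d \<tau>)) (at_right 0)"
      using order_tendstoD(2)[OF quotient \<open>D < D + e\<close>] eventually_in_ball_at_right[OF \<open>0 < \<delta>\<close>, of x0 h]
        eventually_at_right_less[of 0]
    proof eventually_elim
      case (elim \<tau>)
      then have "0 \<le> (\<Phi> (x0 + \<tau> *\<^sub>R h) - \<Phi> x0 + M * infdist (x0 + \<tau> *\<^sub>R h) C) / \<tau>"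
        using min[of "x0 + \<tau> *\<^sub>R h"] by simp
      with elim show ?case
        by (simp add: d_def add_divide_distrib)
    qed
    then have "0 \<le> Liminf (at_right 0) (\<lambda>\<tau>. ereal (D + e) + ereal M * ereal (d \<tau>))"
      by (rule Liminf_bounded)
    also have "\<dots> = ereal (D + e) + ereal M * lower_dini_dist C x0 h"
      using \<open>0 \<le> M\<close> unfolding dini
      by (simp add: Liminf_add_ereal_left Liminf_ereal_mult_left del: times_ereal.simps plus_ereal.simps)
    finally show ?thesis .
  qed
  show ?thesis
  proof (rule ereal_le_epsilon2)
    fix e :: real assume "0 < e"
    have "ereal (D + e) + ereal M * lower_dini_dist C x0 h = ereal D + ereal M * lower_dini_dist C x0 h + ereal e"
      by (simp only: plus_ereal.simps(1)[symmetric] ac_simps)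
    then show "0 \<le> ereal D + ereal M * lower_dini_dist C x0 h + ereal e"
      using approx[OF \<open>0 < e\<close>] by simp
  qed
qed

lemma gateaux_at_norm_quotient:
  assumes "gateaux_at g x D" "g x = 0"
  shows "((\<lambda>\<tau>. norm (g (x + \<tau> *\<^sub>R h)) / \<tau>) \<longlongrightarrow> norm (D h)) (at_right 0)"
proof -
  have "eventually (\<lambda>\<tau>. norm ((g (x + \<tau> *\<^sub>R h) - g x) /\<^sub>R \<tau>) = norm (g (x + \<tau> *\<^sub>R h)) / \<tau>) (at_right 0)"
    using eventually_at_right_less[of 0] by eventually_elim (simp add: assms(2) divide_inverse_commute)
  moreover have "((\<lambda>\<tau>. norm ((g (x + \<tau> *\<^sub>R h) - g x) /\<^sub>R \<tau>)) \<longlongrightarrow> norm (D h)) (at_right 0)"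
    using assms(1) unfolding gateaux_at_def by (intro tendsto_norm) blast
  ultimately show ?thesis
    by (simp add: tendsto_cong)
qed

lemma penalty_quotient:
  fixes F :: "'a::real_normed_vector \<Rightarrow> real" and g :: "'a \<Rightarrow> 'b::real_normed_vector"
  assumes F': "((\<lambda>\<tau>. (F (x0 + \<tau> *\<^sub>R h) - F x0) / \<tau>) \<longlongrightarrow> DF) (at_right 0)"
    and g': "gateaux_at g x0 Dg" "g x0 = 0"
  shows "((\<lambda>\<tau>. (F (x0 + \<tau> *\<^sub>R h) + c * norm (g (x0 + \<tau> *\<^sub>R h)) - (F x0 + c * norm (g x0))) / \<tau>)
    \<longlongrightarrow> DF + c * norm (Dg h)) (at_right 0)"
proof -
  have "(\<lambda>\<tau>. (F (x0 + \<tau> *\<^sub>R h) + c * norm (g (x0 + \<tau> *\<^sub>R h)) - (F x0 + c * norm (g x0))) / \<tau>) =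
      (\<lambda>\<tau>. (F (x0 + \<tau> *\<^sub>R h) - F x0) / \<tau> + c * (norm (g (x0 + \<tau> *\<^sub>R h)) / \<tau>))"
    using \<open>g x0 = 0\<close> by (simp add: fun_eq_iff diff_divide_distrib add_divide_distrib)
  then show ?thesis
    by (simp only:) (intro tendsto_add tendsto_mult_left F' gateaux_at_norm_quotient[OF g'])
qed

section \<open>Reduction to a real-valued objective\<close>

lemma ereal_lipschitz_imp_finite:
  fixes f :: "'a::real_normed_vector \<Rightarrow> ereal"
  assumes lip: "\<forall>x\<in>S. \<forall>x'\<in>S. f x - f x' \<le> ereal (L * norm (x - x'))"
    and "x0 \<in> S" "\<bar>f x0\<bar> \<noteq> \<infinity>" "\<And>x. f x \<noteq> - \<infinity>" "x \<in> S"
  shows "f x = ereal (real_of_ereal (f x))"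
proof -
  obtain c where "f x0 = ereal c" using assms(3) by (cases "f x0") auto
  then have "f x \<noteq> \<infinity>" using lip \<open>x \<in> S\<close> \<open>x0 \<in> S\<close> by force
  then show ?thesis using assms(4)[of x] by (cases "f x") auto
qed

lemma ereal_lipschitz_imp_lipschitz_on:
  fixes f :: "'a::real_normed_vector \<Rightarrow> ereal"
  assumes lip: "\<forall>x\<in>S. \<forall>x'\<in>S. f x - f x' \<le> ereal (L * norm (x - x'))" and "0 \<le> L"
    and finite: "\<And>x. x \<in> S \<Longrightarrow> f x = ereal (real_of_ereal (f x))"
  shows "L-lipschitz_on S (\<lambda>x. real_of_ereal (f x))"
proof (rule lipschitz_onI[OF _ \<open>0 \<le> L\<close>])
  fix x y assume "x \<in> S" "y \<in> S"
  then have "f x - f y \<le> ereal (L * norm (x - y))" "f y - f x \<le> ereal (L * norm (x - y))"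
    using lip by (auto simp: norm_minus_commute)
  then have "real_of_ereal (f x) - real_of_ereal (f y) \<le> L * norm (x - y)"
    "real_of_ereal (f y) - real_of_ereal (f x) \<le> L * norm (x - y)"
    using finite[OF \<open>x \<in> S\<close>] finite[OF \<open>y \<in> S\<close>] by (metis ereal_minus(1) ereal_less_eq(3))+
  then show "dist (real_of_ereal (f x)) (real_of_ereal (f y)) \<le> L * dist x y"
    by (simp add: dist_real_def dist_norm abs_le_iff)
qed

lemma gateaux_at_ereal_real_quotient:
  assumes "gateaux_at_ereal f x D" "0 < r" and finite: "\<And>y. y \<in> ball x r \<Longrightarrow> f y = ereal (F y)"
  shows "((\<lambda>\<tau>. (F (x + \<tau> *\<^sub>R h) - F x) / \<tau>) \<longlongrightarrow> D h) (at_right 0)"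
proof -
  have "eventually (\<lambda>\<tau>. (f (x + \<tau> *\<^sub>R h) - f x) / ereal \<tau> = ereal ((F (x + \<tau> *\<^sub>R h) - F x) / \<tau>)) (at_right 0)"
    using eventually_in_ball_at_right[OF \<open>0 < r\<close>, of x h]
    by eventually_elim (simp add: finite \<open>0 < r\<close>)
  moreover have "((\<lambda>\<tau>. (f (x + \<tau> *\<^sub>R h) - f x) / ereal \<tau>) \<longlongrightarrow> ereal (D h)) (at_right 0)"
    using assms(1) unfolding gateaux_at_ereal_def by blast
  ultimately have "((\<lambda>\<tau>. ereal ((F (x + \<tau> *\<^sub>R h) - F x) / \<tau>)) \<longlongrightarrow> ereal (D h)) (at_right 0)"
    by (simp add: tendsto_cong)
  then show ?thesis by simp
qed

lemma local_solution_real_penalty: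
  fixes f :: "'a::real_normed_vector \<Rightarrow> ereal" and g :: "'a \<Rightarrow> 'b::real_normed_vector"
  assumes f_values: "\<forall>x. f x \<noteq> -\<infinity>" and sol: "local_solution f g C x0"
    and Hf_diff: "gateaux_at_ereal f x0 Df" and "0 < r" "0 \<le> Kf"
    and Hf_lip: "\<forall>x\<in>cball x0 r. \<forall>x'\<in>cball x0 r. f x - f x' \<le> ereal (Kf * norm (x - x'))"
    and "0 < s" and calm: "\<forall>x\<in>cball x0 s \<inter> C. infdist x ({x. g x = 0} \<inter> C) \<le> a * norm (g x)"
  obtains \<delta> F where "0 < \<delta>" "Kf-lipschitz_on (ball x0 \<delta>) F"
    "\<And>h. ((\<lambda>\<tau>. (F (x0 + \<tau> *\<^sub>R h) - F x0) / \<tau>) \<longlongrightarrow> Df h) (at_right 0)"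
    "\<And>x. x \<in> C \<Longrightarrow> x \<in> ball x0 \<delta> \<Longrightarrow> F x0 \<le> F x + Kf * a * norm (g x)"
proof -
  obtain \<epsilon> where "x0 \<in> C" "g x0 = 0" "0 < \<epsilon>"
    and loc: "\<forall>x\<in>C. g x = 0 \<and> x \<in> ball x0 \<epsilon> \<longrightarrow> f x0 \<le> f x"
    using sol unfolding local_solution_def by blast
  define F where "F x = real_of_ereal (f x)" for x
  define \<rho> where "\<rho> = min r (min \<epsilon> s)"
  have "0 < \<rho>" using \<open>0 < r\<close> \<open>0 < \<epsilon>\<close> \<open>0 < s\<close> by (simp add: \<rho>_def)
  have "\<bar>f x0\<bar> \<noteq> \<infinity>" using Hf_diff by (simp add: gateaux_at_ereal_def)
  have f_finite: "f x = ereal (real_of_ereal (f x))" if "x \<in> cball x0 r" for x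
    by (rule ereal_lipschitz_imp_finite[OF Hf_lip _ \<open>\<bar>f x0\<bar> \<noteq> \<infinity>\<close> _ that])
      (use \<open>0 < r\<close> f_values in auto)
  then have f_F: "f x = ereal (F x)" if "x \<in> cball x0 r" for x
    using that unfolding F_def .
  have "Kf-lipschitz_on (cball x0 r) F"
    unfolding F_def by (rule ereal_lipschitz_imp_lipschitz_on[OF Hf_lip \<open>0 \<le> Kf\<close> f_finite])
  then have F_lip: "Kf-lipschitz_on (ball x0 \<rho>) F"
    by (rule lipschitz_on_subset) (auto simp: \<rho>_def)
  show thesis
  proof (rule that)
    show "0 < \<rho> / 3" using \<open>0 < \<rho>\<close> by simp
    show "Kf-lipschitz_on (ball x0 (\<rho> / 3)) F"
      by (rule lipschitz_on_subset[OF F_lip subset_ball]) (use \<open>0 < \<rho>\<close> in simp)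
    show "((\<lambda>\<tau>. (F (x0 + \<tau> *\<^sub>R h) - F x0) / \<tau>) \<longlongrightarrow> Df h) (at_right 0)" for h
      by (rule gateaux_at_ereal_real_quotient[OF Hf_diff \<open>0 < r\<close> f_F]) simp
    show "F x0 \<le> F x + Kf * a * norm (g x)" if "x \<in> C" "x \<in> ball x0 (\<rho> / 3)" for x
    proof (rule calm_exact_penalization[where g = g and a = a, OF F_lip \<open>x0 \<in> C\<close> \<open>g x0 = 0\<close> _ _ that])
      show "F x0 \<le> F z" if "z \<in> C" "g z = 0" "z \<in> ball x0 \<rho>" for z
        using loc that f_F[of x0] f_F[of z] \<open>0 < r\<close> by (auto simp: \<rho>_def)
      show "infdist x ({x. g x = 0} \<inter> C) \<le> a * norm (g x)" if "x \<in> C" "x \<in> ball x0 \<rho>" for x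
        using calm that by (auto simp: \<rho>_def)
    qed
  qed
qed

section \<open>Multiplier rules\<close>

lemma multiplier_rule_interior:
  fixes F :: "'a::real_normed_vector \<Rightarrow> real" and g :: "'a \<Rightarrow> 'b::real_normed_vector"
    and Df :: "'a \<Rightarrow>\<^sub>L real" and Dg :: "'a \<Rightarrow>\<^sub>L 'b"
  assumes "x0 \<in> interior C" "0 < \<delta>" "0 \<le> c"
    and pen: "\<And>x. x \<in> C \<Longrightarrow> x \<in> ball x0 \<delta> \<Longrightarrow> F x0 \<le> F x + c * norm (g x)"
    and F': "\<And>h. ((\<lambda>\<tau>. (F (x0 + \<tau> *\<^sub>R h) - F x0) / \<tau>) \<longlongrightarrow> Df h) (at_right 0)"
    and g': "gateaux_at g x0 Dg" "g x0 = 0"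
  shows "\<exists>ys::'b \<Rightarrow>\<^sub>L real. norm ys \<le> c \<and> Df + (ys o\<^sub>L Dg) = 0"
proof -
  obtain \<epsilon> where "0 < \<epsilon>" "ball x0 \<epsilon> \<subseteq> C" using assms(1) mem_interior by blast
  define \<Phi> where "\<Phi> x = F x + c * norm (g x)" for x
  have "0 \<le> ereal (Df h + c * norm (Dg h)) + ereal 0 * lower_dini_dist C x0 h" for h
  proof (rule local_min_dini_inequality[of "min \<delta> \<epsilon>" 0 x0 \<Phi>])
    show "\<Phi> x0 \<le> \<Phi> x + 0 * infdist x C" if "x \<in> ball x0 (min \<delta> \<epsilon>)" for x
      using pen[of x] that \<open>ball x0 \<epsilon> \<subseteq> C\<close> \<open>g x0 = 0\<close> by (auto simp: \<Phi>_def)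
    show "((\<lambda>\<tau>. (\<Phi> (x0 + \<tau> *\<^sub>R h) - \<Phi> x0) / \<tau>) \<longlongrightarrow> Df h + c * norm (Dg h)) (at_right 0)"
      unfolding \<Phi>_def by (rule penalty_quotient[OF F' g'])
  qed (use \<open>0 < \<delta>\<close> \<open>0 < \<epsilon>\<close> in auto)
  \<comment> \<open>With M = 0 the Dini term vanishes even where it is infinite, since 0 * \<infinity> = 0 in ereal.\<close>
  then have "0 \<le> Df h + c * norm (Dg h)" for h by (simp add: zero_ereal_def[symmetric])
  then obtain ys where "norm ys \<le> c" "\<exists>n\<in>polar_cone UNIV. Df + (ys o\<^sub>L Dg) + n = 0"
    using polar_multiplier_exists[of UNIV c Df Dg] \<open>0 \<le> c\<close> by auto
  then show ?thesis by (auto simp: polar_cone_UNIV)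
qed

lemma penalized_dini_inequality:
  fixes F :: "'a::real_normed_vector \<Rightarrow> real" and g :: "'a \<Rightarrow> 'b::real_normed_vector"
    and Df :: "'a \<Rightarrow>\<^sub>L real" and Dg :: "'a \<Rightarrow>\<^sub>L 'b"
  assumes "x0 \<in> C" "0 < \<delta>" "0 < \<delta>'" "0 \<le> c"
    and pen: "\<And>x. x \<in> C \<Longrightarrow> x \<in> ball x0 \<delta> \<Longrightarrow> F x0 \<le> F x + c * norm (g x)"
    and F_lip: "L-lipschitz_on (ball x0 \<delta>) F" and g_lip: "Kg-lipschitz_on (ball x0 \<delta>') g"
    and F': "((\<lambda>\<tau>. (F (x0 + \<tau> *\<^sub>R h) - F x0) / \<tau>) \<longlongrightarrow> Df h) (at_right 0)"
    and g': "gateaux_at g x0 Dg" "g x0 = 0"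
  shows "0 \<le> ereal (Df h + c * norm (Dg h)) + ereal (L + c * Kg) * lower_dini_dist C x0 h"
proof -
  define \<rho> where "\<rho> = min \<delta> \<delta>'"
  define \<Phi> where "\<Phi> x = F x + c * norm (g x)" for x
  have g_lip': "Kg-lipschitz_on (ball x0 \<rho>) g"
    by (rule lipschitz_on_subset[OF g_lip]) (auto simp: \<rho>_def)
  have "Kg-lipschitz_on (ball x0 \<rho>) (\<lambda>x. norm (g x))"
  proof (rule lipschitz_onI)
    show "dist (norm (g x)) (norm (g y)) \<le> Kg * dist x y" if "x \<in> ball x0 \<rho>" "y \<in> ball x0 \<rho>" for x y
      using norm_triangle_ineq3[of "g x" "g y"] lipschitz_onD[OF g_lip' that]
      by (simp add: dist_real_def dist_norm)
  qed (rule lipschitz_on_nonneg[OF g_lip])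
  moreover have "L-lipschitz_on (ball x0 \<rho>) F"
    by (rule lipschitz_on_subset[OF F_lip]) (auto simp: \<rho>_def)
  ultimately have lip: "(L + c * Kg)-lipschitz_on (ball x0 \<rho>) \<Phi>"
    unfolding \<Phi>_def using \<open>0 \<le> c\<close> by (intro lipschitz_on_add lipschitz_on_cmult_real_nonneg)
  show ?thesis
  proof (rule local_min_dini_inequality[of "\<rho> / 3" "L + c * Kg" x0 \<Phi>])
    show "\<Phi> x0 \<le> \<Phi> x + (L + c * Kg) * infdist x C" if "x \<in> ball x0 (\<rho> / 3)" for x
      using exact_penalization[OF lip \<open>x0 \<in> C\<close> _ that] pen \<open>g x0 = 0\<close> by (simp add: \<Phi>_def \<rho>_def)
    show "((\<lambda>\<tau>. (\<Phi> (x0 + \<tau> *\<^sub>R h) - \<Phi> x0) / \<tau>) \<longlongrightarrow> Df h + c * norm (Dg h)) (at_right 0)"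
      unfolding \<Phi>_def by (rule penalty_quotient[OF F' g'])
  qed (use lipschitz_on_nonneg[OF lip] \<open>0 < \<delta>\<close> \<open>0 < \<delta>'\<close> in \<open>auto simp: \<rho>_def\<close>)
qed

lemma clarke_normal_multiplier:
  fixes Df :: "'a::real_normed_vector \<Rightarrow>\<^sub>L real" and Dg :: "'a \<Rightarrow>\<^sub>L 'b::real_normed_vector"
  assumes "x0 \<in> C" "0 \<le> c"
    and dini: "\<And>h. 0 \<le> ereal (Df h + c * norm (Dg h)) + ereal M * lower_dini_dist C x0 h"
  shows "\<exists>ys::'b \<Rightarrow>\<^sub>L real. norm ys \<le> c \<and> (\<exists>n\<in>clarke_normal_cone C x0. Df + (ys o\<^sub>L Dg) + n = 0)"
  unfolding clarke_normal_cone_def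
proof (rule polar_multiplier_exists)
  have "convex_cone (clarke_tangent_cone C x0)"
    using convex_cone_clarke_tangent_cone \<open>x0 \<in> C\<close> by blast
  then show "convex (clarke_tangent_cone C x0)" "clarke_tangent_cone C x0 \<noteq> {}"
    by (simp_all add: convex_cone_def)
  show "0 \<le> Df h + c * norm (Dg h)" if "h \<in> clarke_tangent_cone C x0" for h
    using nonneg_on_contingent_cone[OF dini] clarke_tangent_cone_subset_contingent_cone[OF \<open>x0 \<in> C\<close>] that
    by blast
qed (rule \<open>0 \<le> c\<close>)

lemma contingent_polar_multiplier:
  fixes Df :: "'a::real_normed_vector \<Rightarrow>\<^sub>L real" and Dg :: "'a \<Rightarrow>\<^sub>L 'b::real_normed_vector"
  assumes "x0 \<in> C" "0 \<le> c"
    and dini: "\<And>h. 0 \<le> ereal (Df h + c * norm (Dg h)) + ereal M * lower_dini_dist C x0 h"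
    and "convex (contingent_cone C x0)"
  shows "\<exists>ys::'b \<Rightarrow>\<^sub>L real. norm ys \<le> c \<and> (\<exists>n\<in>polar_cone (contingent_cone C x0). Df + (ys o\<^sub>L Dg) + n = 0)"
proof (rule polar_multiplier_exists)
  show "contingent_cone C x0 \<noteq> {}"
    using zero_in_clarke_tangent_cone clarke_tangent_cone_subset_contingent_cone[OF \<open>x0 \<in> C\<close>] by blast
  show "0 \<le> Df h + c * norm (Dg h)" if "h \<in> contingent_cone C x0" for h
    using nonneg_on_contingent_cone[OF dini that] .
qed fact+

theorem theorem3p1:
  fixes f :: "'a::banach \<Rightarrow> ereal" and g :: "'a \<Rightarrow> 'b::banach"
    and C :: "'a set" and x0 :: 'a
    and Df :: "'a \<Rightarrow>\<^sub>L real" and Dg :: "'a \<Rightarrow>\<^sub>L 'b"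
    and r Kf a s :: real
  assumes C_closed: "closed C" and C_ne: "C \<noteq> {}"
    and f_values: "\<forall>x. f x \<noteq> -\<infinity>"
    and sol: "local_solution f g C x0"
    and Hf_diff: "gateaux_at_ereal f x0 Df"
    and r_pos: "r > 0" and Kf_pos: "Kf > 0"
    and Hf_lip: "\<forall>x\<in>cball x0 r. \<forall>x'\<in>cball x0 r. f x - f x' \<le> ereal (Kf * norm (x - x'))"
    and Hg_diff: "gateaux_at g x0 Dg"
    and a_pos: "a > 0" and s_pos: "s > 0"
    and calm: "\<forall>x\<in>cball x0 s \<inter> C. infdist x ({x. g x = 0} \<inter> C) \<le> a * norm (g x)"
  shows "(x0 \<in> interior C \<longrightarrow>
            (\<exists>ys :: 'b \<Rightarrow>\<^sub>L real. norm ys \<le> Kf * a \<and> Df + (ys o\<^sub>L Dg) = 0))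
       \<and> (\<forall>Kg>0. (\<exists>\<delta>>0. \<forall>x\<in>cball x0 \<delta>. \<forall>x'\<in>cball x0 \<delta>. norm (g x - g x') \<le> Kg * norm (x - x')) \<longrightarrow>
            (\<forall>h. ereal (blinfun_apply Df h + Kf * a * norm (blinfun_apply Dg h))
                   + ereal (Kf * (1 + Kg * a)) * lower_dini_dist C x0 h \<ge> 0)
          \<and> (\<exists>ys :: 'b \<Rightarrow>\<^sub>L real. norm ys \<le> Kf * a \<and>
               (\<exists>n\<in>clarke_normal_cone C x0. Df + (ys o\<^sub>L Dg) + n = 0))
          \<and> (convex (contingent_cone C x0) \<longrightarrow>
               (\<exists>ys :: 'b \<Rightarrow>\<^sub>L real. norm ys \<le> Kf * a \<and>
                 (\<exists>n\<in>polar_cone (contingent_cone C x0). Df + (ys o\<^sub>L Dg) + n = 0))))"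
proof -
  have "x0 \<in> C" "g x0 = 0" using sol by (simp_all add: local_solution_def)
  have "0 \<le> Kf * a" using Kf_pos a_pos by simp
  obtain \<delta> F where "0 < \<delta>" and F_lip: "Kf-lipschitz_on (ball x0 \<delta>) F"
    and F': "\<And>h. ((\<lambda>\<tau>. (F (x0 + \<tau> *\<^sub>R h) - F x0) / \<tau>) \<longlongrightarrow> Df h) (at_right 0)"
    and pen: "\<And>x. x \<in> C \<Longrightarrow> x \<in> ball x0 \<delta> \<Longrightarrow> F x0 \<le> F x + Kf * a * norm (g x)"
    using local_solution_real_penalty[OF f_values sol Hf_diff r_pos less_imp_le[OF Kf_pos] Hf_lip s_pos calm]
    by blast
  have "x0 \<in> interior C \<longrightarrow> (\<exists>ys :: 'b \<Rightarrow>\<^sub>L real. norm ys \<le> Kf * a \<and> Df + (ys o\<^sub>L Dg) = 0)"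
    using multiplier_rule_interior[OF _ \<open>0 < \<delta>\<close> \<open>0 \<le> Kf * a\<close> pen F' Hg_diff \<open>g x0 = 0\<close>] by blast
  moreover have "(\<forall>h. ereal (Df h + Kf * a * norm (Dg h)) + ereal (Kf * (1 + Kg * a)) * lower_dini_dist C x0 h \<ge> 0)
      \<and> (\<exists>ys :: 'b \<Rightarrow>\<^sub>L real. norm ys \<le> Kf * a \<and> (\<exists>n\<in>clarke_normal_cone C x0. Df + (ys o\<^sub>L Dg) + n = 0))
      \<and> (convex (contingent_cone C x0) \<longrightarrow> (\<exists>ys :: 'b \<Rightarrow>\<^sub>L real. norm ys \<le> Kf * a \<and>
            (\<exists>n\<in>polar_cone (contingent_cone C x0). Df + (ys o\<^sub>L Dg) + n = 0)))"
    if "0 < Kg" and g_lip: "\<exists>\<delta>>0. \<forall>x\<in>cball x0 \<delta>. \<forall>x'\<in>cball x0 \<delta>. norm (g x - g x') \<le> Kg * norm (x - x')"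
    for Kg
  proof -
    obtain \<delta>g where "0 < \<delta>g"
      and g_lip_\<delta>g: "\<forall>x\<in>cball x0 \<delta>g. \<forall>x'\<in>cball x0 \<delta>g. norm (g x - g x') \<le> Kg * norm (x - x')"
      using g_lip by blast
    then have g_lip_ball: "Kg-lipschitz_on (ball x0 \<delta>g) g"
      using \<open>0 < Kg\<close> by (auto simp: lipschitz_on_def dist_norm)
    have "Kf + Kf * a * Kg = Kf * (1 + Kg * a)"
      by (simp add: algebra_simps)
    then have dini:
      "0 \<le> ereal (Df h + Kf * a * norm (Dg h)) + ereal (Kf * (1 + Kg * a)) * lower_dini_dist C x0 h" for h
      using penalized_dini_inequality[OF \<open>x0 \<in> C\<close> \<open>0 < \<delta>\<close> \<open>0 < \<delta>g\<close> \<open>0 \<le> Kf * a\<close> pen F_lip g_lip_ball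
          F' Hg_diff \<open>g x0 = 0\<close>]
      by simp
    show ?thesis
      using dini clarke_normal_multiplier[OF \<open>x0 \<in> C\<close> \<open>0 \<le> Kf * a\<close> dini]
        contingent_polar_multiplier[OF \<open>x0 \<in> C\<close> \<open>0 \<le> Kf * a\<close> dini] by simp
  qed
  ultimately show ?thesis by blast
qed

end
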